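(* Let $(\mathcal{X},d)$ be a complete, separable, non-compact, locally compact, non-branching length space and $p>1$. Let $(\mu_t)_{t\ge0}$ and $(\nu_t)_{t\ge0}$ be two unit-speed rays in $P_p(\mathcal{X})$. If there exists a sequence $\{t_n\}$ of positive numbers tending to $0$ such that for each $n$ the ray $(\nu_{t+t_n})_{t\ge0}$ is the unique co-ray from $\nu_{t_n}$ to $(\mu_t)_{t\ge0}$, then $(\nu_t)_{t\ge0}$ is a co-ray from $\nu_0$ to $(\mu_t)_{t\ge0}$.
   Context: $P_p(\mathcal{X})$: Borel probability measures on $\mathcal{X}$ with finite $p$-th moment, with $W_p(\mu,\nu)=\big(\min_{\pi}\int d(x,y)^p\,d\pi\big)^{1/p}$ over couplings $\pi$ of $\mu,\nu$. A ray in a metric space $(\mathcal{Y},d)$ is a continuous $\gamma:[0,\infty)\to\mathcal{Y}$ with $d(\gamma_s,\gamma_t)=|s-t|\,d(\gamma_0,\gamma_1)$; unit-speed means $d(\gamma_0,\gamma_1)=1$. A geodesic $\zeta:[a,b]\to\mathcal{Y}$ satisfies $d(\zeta_s,\zeta_t)=\frac{|t-s|}{b-a}d(\zeta_a,\zeta_b)$. $\mathcal{X}$ is non-branching if every geodesic $\zeta:[a,b]\to\mathcal{X}$ is uniquely determined by its restriction to any nontrivial subinterval. $T(\mu,\nu)$ ($L=W_p(\mu,\nu)$) is the set of curves $(\mu_t)_{0\le t\le L}$ in $P_p(\mathcal{X})$ with $\mu_0=\mu$, $\mu_L=\nu$, $W_p(\mu_s,\mu_t)=|s-t|$. Co-ray: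 a ray $(\lambda_t)_{t\ge0}$ in $P_p(\mathcal{X})$ is a co-ray from $\lambda_0$ to the unit-speed ray $(\mu_t)_{t\ge0}$ if there exist $s_n\to+\infty$, $\lambda_0^n\in P_p(\mathcal{X})$ with $W_p(\lambda_0^n,\lambda_0)\to0$, and $(\lambda^n_t)_{0\le t\le L_n}\in T(\lambda_0^n,\mu_{s_n})$, $L_n=W_p(\lambda_0^n,\mu_{s_n})$, with $W_p(\lambda_t^n,\lambda_t)\to0$ for every $t\ge0$. *)

theory Defs
  imports "HOL-Analysis.Analysis" "HOL-Probability.Probability"
begin

definition curve_length :: "(real \<Rightarrow> 'a::metric_space) \<Rightarrow> real \<Rightarrow> real \<Rightarrow> ereal" where
  "curve_length g a b =
     (SUP ts \<in> {ts. sorted ts \<and> set ts \<subseteq> {a..b}}.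
        ereal (\<Sum>i<length ts - 1. dist (g (ts ! i)) (g (ts ! Suc i))))"

definition length_space :: "'a::metric_space itself \<Rightarrow> bool" where
  "length_space _ \<longleftrightarrow>
     (\<forall>x y::'a. ereal (dist x y) =
        (INF g \<in> {g. continuous_on {0..1} g \<and> g 0 = x \<and> g 1 = y}. curve_length g 0 1))"

definition is_geodesic :: "(real \<Rightarrow> 'a::metric_space) \<Rightarrow> real \<Rightarrow> real \<Rightarrow> bool" where
  "is_geodesic z a b \<longleftrightarrow> a < b \<and>
     (\<forall>s\<in>{a..b}. \<forall>t\<in>{a..b}. dist (z s) (z t) = \<bar>t - s\<bar> / (b - a) * dist (z a) (z b))"

definition non_branching :: "'a::metric_space itself \<Rightarrow> bool" where
  "non_branching _ \<longleftrightarrow>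
     (\<forall>(z::real \<Rightarrow> 'a) z' a b c e. is_geodesic z a b \<and> is_geodesic z' a b \<and>
        a \<le> c \<and> c < e \<and> e \<le> b \<and> (\<forall>t\<in>{c..e}. z t = z' t)
        \<longrightarrow> (\<forall>t\<in>{a..b}. z t = z' t))"

definition Pp :: "real \<Rightarrow> 'a::metric_space measure set" where
  "Pp p = {m. prob_space m \<and> sets m = sets borel \<and>
              (\<exists>x0. (\<integral>\<^sup>+ x. ennreal (dist x0 x powr p) \<partial>m) < \<infinity>)}"

definition couplings :: "'a::metric_space measure \<Rightarrow> 'a measure \<Rightarrow> ('a \<times> 'a) measure set" where
  "couplings m n = {pi. prob_space pi \<and> sets pi = sets (borel \<Otimes>\<^sub>M borel) \<and>
                        distr pi borel fst = m \<and> distr pi borel snd = n}"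

definition Wp :: "real \<Rightarrow> 'a::metric_space measure \<Rightarrow> 'a measure \<Rightarrow> real" where
  "Wp p m n = enn2real (INF pi \<in> couplings m n. \<integral>\<^sup>+ xy. ennreal (dist (fst xy) (snd xy) powr p) \<partial>pi)
              powr (1 / p)"

definition is_ray :: "real \<Rightarrow> (real \<Rightarrow> 'a::metric_space measure) \<Rightarrow> bool" where
  "is_ray p l \<longleftrightarrow> (\<forall>t\<ge>0. l t \<in> Pp p) \<and>
     (\<forall>s\<ge>0. \<forall>t\<ge>0. Wp p (l s) (l t) = \<bar>s - t\<bar> * Wp p (l 0) (l 1))"

definition unit_ray :: "real \<Rightarrow> (real \<Rightarrow> 'a::metric_space measure) \<Rightarrow> bool" where
  "unit_ray p l \<longleftrightarrow> is_ray p l \<and> Wp p (l 0) (l 1) = 1"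

definition Tgeod :: "real \<Rightarrow> 'a::metric_space measure \<Rightarrow> 'a measure \<Rightarrow> (real \<Rightarrow> 'a measure) set" where
  "Tgeod p m n = {c. (\<forall>t\<in>{0..Wp p m n}. c t \<in> Pp p) \<and> c 0 = m \<and> c (Wp p m n) = n \<and>
      (\<forall>s\<in>{0..Wp p m n}. \<forall>t\<in>{0..Wp p m n}. Wp p (c s) (c t) = \<bar>s - t\<bar>)}"

definition co_ray :: "real \<Rightarrow> (real \<Rightarrow> 'a::metric_space measure) \<Rightarrow> (real \<Rightarrow> 'a measure) \<Rightarrow> bool" where
  "co_ray p l mu \<longleftrightarrow> is_ray p l \<and>
     (\<exists>(s::nat \<Rightarrow> real) (l0::nat \<Rightarrow> 'a measure) (ln::nat \<Rightarrow> real \<Rightarrow> 'a measure).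
        filterlim s at_top sequentially \<and>
        (\<forall>n. l0 n \<in> Pp p) \<and>
        (\<lambda>n. Wp p (l0 n) (l 0)) \<longlonglongrightarrow> 0 \<and>
        (\<forall>n. ln n \<in> Tgeod p (l0 n) (mu (s n))) \<and>
        (\<forall>t\<ge>0. (\<lambda>n. Wp p (ln n t) (l t)) \<longlonglongrightarrow> 0))"

end

(* For a ray l, the co-ray condition is equivalent to a locally uniform one: there are points
   mu s with s arbitrarily large and W_p-geodesics towards them, starting near l 0, that stay
   uniformly close to l on any given [0, T]; indeed pointwise convergence of 1-Lipschitz curves
   is uniform on compact intervals. The uniform condition passes from the shifted rays
   nu (t + t_n) to nu, because W_p (nu (t + t_n), nu t) = t_n tends to 0, and a diagonal choice
   turns it back into the co-ray condition for nu. Only the triangle inequality for W_p is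
   needed; it is proved by gluing nearly optimal couplings along a fine countable Borel
   partition of the separable space. *)

theory Submission
  imports Defs
begin

lemma convex_on_powr_nonneg:
  assumes "p \<ge> 1"
  shows "convex_on {0..} (\<lambda>x::real. x powr p)"
proof (rule convex_on_linorderI)
  fix t x y :: real
  assume t: "0 < t" "t < 1" and x: "x \<in> {0..}" and y: "y \<in> {0..}" and "x < y"
  show "((1 - t) *\<^sub>R x + t *\<^sub>R y) powr p \<le> (1 - t) * x powr p + t * y powr p"
  proof (cases "x = 0")
    case True
    have "t powr p \<le> t powr 1"
      using t assms by (intro powr_mono') auto
    then have "t powr p * y powr p \<le> t * y powr p"
      using t by (intro mult_right_mono) auto
    then show ?thesis
      using True assms by (simp add: powr_mult)
  next
    case False
    then show ?thesis
      using convex_onD[OF powr_convex[OF assms], of t x y] t x y \<open>x < y\<close> by auto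
  qed
qed (rule convex_real_interval)

lemma powr_sum_le_weighted:
  fixes u r :: "'i \<Rightarrow> real"
  assumes S: "finite S" and p: "p \<ge> 1"
    and u: "\<And>i. i \<in> S \<Longrightarrow> u i \<ge> 0" and r: "\<And>i. i \<in> S \<Longrightarrow> r i > 0"
  shows "(\<Sum>i\<in>S. u i) powr p \<le> (\<Sum>i\<in>S. r i) powr (p - 1) * (\<Sum>i\<in>S. r i powr (1 - p) * u i powr p)"
proof (cases "S = {}")
  case True
  then show ?thesis using p by simp
next
  case False
  define R where "R = (\<Sum>i\<in>S. r i)"
  have R: "R > 0"
    unfolding R_def using S False r by (intro sum_pos) auto
  have r_R: "r i / R \<ge> 0" "r i \<noteq> 0" if "i \<in> S" for i
    using r[OF that] R by auto
  have "(\<Sum>i\<in>S. (r i / R) *\<^sub>R (u i / r i)) powr p \<le> (\<Sum>i\<in>S. r i / R * (u i / r i) powr p)"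
    using S False convex_on_powr_nonneg[OF p] u r R
    by (intro convex_on_sum) (auto simp: R_def sum_divide_distrib[symmetric] less_imp_le)
  moreover have "(\<Sum>i\<in>S. (r i / R) *\<^sub>R (u i / r i)) = (\<Sum>i\<in>S. u i) / R"
    using r_R by (simp add: sum_divide_distrib)
  moreover have "(\<Sum>i\<in>S. r i / R * (u i / r i) powr p) = (\<Sum>i\<in>S. r i powr (1 - p) * u i powr p) / R"
    unfolding sum_divide_distrib
    using r u by (intro sum.cong) (auto simp: powr_divide powr_diff mult.commute less_imp_le)
  ultimately have "(\<Sum>i\<in>S. u i) powr p / R powr p \<le> (\<Sum>i\<in>S. r i powr (1 - p) * u i powr p) / R"
    using R u by (simp add: powr_divide sum_nonneg)
  then show ?thesis
    using R by (simp add: R_def[symmetric] powr_diff field_simps)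
qed

lemma powr_add_le:
  fixes a b p :: real
  assumes "p \<ge> 1" "a \<ge> 0" "b \<ge> 0"
  shows "(a + b) powr p \<le> 2 powr (p - 1) * (a powr p + b powr p)"
  using powr_sum_le_weighted[of "{0::nat, 1}" p "\<lambda>i. if i = 0 then a else b" "\<lambda>_. 1"] assms
  by simp

lemma separable_space_dense_seq:
  assumes "separable_space (euclidean :: 'a topology)"
  obtains q :: "nat \<Rightarrow> 'a::metric_space" where "\<And>x e. e > 0 \<Longrightarrow> \<exists>i. dist (q i) x < e"
proof -
  from assms obtain C :: "'a set" where C: "countable C" "closure C = UNIV"
    unfolding separable_space_def by (auto simp: euclidean_closure_of)
  then have "C \<noteq> {}" by auto
  have "\<exists>i. dist (from_nat_into C i) x < e" if "e > 0" for x :: 'a and e :: real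
  proof -
    obtain y where "y \<in> C" "dist y x < e"
      using C(2) \<open>e > 0\<close> closure_approachable by blast
    then show ?thesis
      using range_from_nat_into[OF \<open>C \<noteq> {}\<close> C(1)] by (metis imageE)
  qed
  then show ?thesis using that by blast
qed

lemma borel_measurable_dist_left [measurable]: "(\<lambda>x::'a::metric_space. dist z x) \<in> borel_measurable borel"
  and borel_measurable_dist_right [measurable]: "(\<lambda>x::'a::metric_space. dist x z) \<in> borel_measurable borel"
  by (intro borel_measurable_continuous_onI continuous_intros)+

text \<open>Without second countability, \<^term>\<open>borel \<Otimes>\<^sub>M borel\<close> may be smaller than the Borel
  \<sigma>-algebra of the product; here \<^term>\<open>dist\<close> is an infimum over a dense sequence.\<close>
lemma borel_measurable_dist_pair:
  assumes "separable_space (euclidean :: 'a::metric_space topology)"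
  shows "(\<lambda>\<omega>::'a \<times> 'a. dist (fst \<omega>) (snd \<omega>)) \<in> borel_measurable (borel \<Otimes>\<^sub>M borel)"
proof -
  obtain q :: "nat \<Rightarrow> 'a" where q: "\<And>x e. e > 0 \<Longrightarrow> \<exists>i. dist (q i) x < e"
    using separable_space_dense_seq[OF assms] by blast
  define g where "g \<omega> = (INF i. ennreal (dist (fst \<omega>) (q i) + dist (q i) (snd \<omega>)))" for \<omega> :: "'a \<times> 'a"
  have "g \<in> borel_measurable (borel \<Otimes>\<^sub>M borel)"
    unfolding g_def by measurable
  moreover have g_eq: "g \<omega> = ennreal (dist (fst \<omega>) (snd \<omega>))" for \<omega>
  proof (rule antisym)
    show "ennreal (dist (fst \<omega>) (snd \<omega>)) \<le> g \<omega>"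
      unfolding g_def by (intro INF_greatest ennreal_leI dist_triangle)
    show "g \<omega> \<le> ennreal (dist (fst \<omega>) (snd \<omega>))"
    proof (rule ennreal_le_epsilon)
      fix e :: real
      assume "0 < e"
      then obtain i where i: "dist (q i) (fst \<omega>) < e / 2" using q[of "e / 2"] by auto
      have "g \<omega> \<le> ennreal (dist (fst \<omega>) (q i) + dist (q i) (snd \<omega>))"
        unfolding g_def by (rule INF_lower) simp
      also have "\<dots> \<le> ennreal (dist (fst \<omega>) (snd \<omega>) + e)"
        using i dist_triangle[of "q i" "snd \<omega>" "fst \<omega>"] by (intro ennreal_leI) (simp add: dist_commute)
      finally show "g \<omega> \<le> ennreal (dist (fst \<omega>) (snd \<omega>)) + ennreal e"
        using \<open>0 < e\<close> by (simp add: ennreal_plus)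
    qed
  qed
  ultimately have "(\<lambda>\<omega>. enn2real (g \<omega>)) \<in> borel_measurable (borel \<Otimes>\<^sub>M borel)"
    by measurable
  then show ?thesis by (simp add: g_eq)
qed

lemma separable_space_small_borel_partition:
  assumes "separable_space (euclidean :: 'a topology)" and "c > 0"
  obtains A :: "nat \<Rightarrow> 'a::metric_space set"
  where "disjoint_family A" "(\<Union>i. A i) = UNIV" "\<And>i. A i \<in> sets borel"
    and "\<And>i y y'. y \<in> A i \<Longrightarrow> y' \<in> A i \<Longrightarrow> dist y y' < c"
proof -
  obtain q :: "nat \<Rightarrow> 'a" where q: "\<And>x e. e > 0 \<Longrightarrow> \<exists>i. dist (q i) x < e"
    using separable_space_dense_seq[OF assms(1)] by blast
  define B where "B i = ball (q i) (c / 2)" for i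
  show thesis
  proof (rule that[of "disjointed B"])
    show "disjoint_family (disjointed B)"
      by (rule disjoint_family_disjointed)
    have "x \<in> (\<Union>i. B i)" for x
      using q[of "c / 2"] \<open>c > 0\<close> by (auto simp: B_def)
    then show "(\<Union>i. disjointed B i) = UNIV"
      by (auto simp: UN_disjointed_eq)
    show "disjointed B i \<in> sets borel" for i
      using sets.range_disjointed_sets[of B borel] by (auto simp: B_def image_subset_iff)
    fix i y y'
    assume "y \<in> disjointed B i" "y' \<in> disjointed B i"
    then have "dist (q i) y < c / 2" "dist (q i) y' < c / 2"
      using disjointed_subset[of B i] by (auto simp: B_def)
    then show "dist y y' < c"
      using dist_triangle3[of y y' "q i"] by linarith
  qed
qed

section \<open>Gluing couplings along a countable partition\<close>

text \<open>Couplings \<open>\<pi>1\<close> of \<open>(m1, m2)\<close> and \<open>\<pi>2\<close> of \<open>(m2, m3)\<close> are glued without disintegration: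
  \<open>\<pi>1 \<Otimes>\<^sub>M \<pi>2\<close> is reweighted so that the two middle points lie in a common cell \<open>A i\<close>, within
  which they are independent. Null cells get the junk weight \<open>1 / 0 = 0\<close>, which is harmless.\<close>
definition cell_density :: "(nat \<Rightarrow> 'a set) \<Rightarrow> 'a measure \<Rightarrow> 'a \<Rightarrow> 'a \<Rightarrow> ennreal" where
  "cell_density A m y y' = (\<Sum>i. ennreal (1 / measure m (A i)) * indicator (A i) y * indicator (A i) y')"

lemma cell_density_commute: "cell_density A m y y' = cell_density A m y' y"
  by (simp add: cell_density_def mult_ac)

lemma cell_density_eq:
  assumes "disjoint_family A" "y \<in> A i"
  shows "cell_density A m y y' = ennreal (1 / measure m (A i)) * indicator (A i) y'"
proof -
  have "indicator (A j) y = (0::ennreal)" if "j \<noteq> i" for j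
    using assms that by (auto simp: disjoint_family_on_def split: split_indicator)
  then show ?thesis
    unfolding cell_density_def
    by (subst suminf_finite[of "{i}"]) (use assms(2) in \<open>auto simp del: sum_mult_indicator\<close>)
qed

lemma cell_density_eq_0:
  assumes "\<And>i. y \<in> A i \<Longrightarrow> y' \<notin> A i"
  shows "cell_density A m y y' = 0"
  using assms unfolding cell_density_def by (subst suminf_eq_zero_iff) (auto split: split_indicator)

lemma measurable_cell_density[measurable (raw)]:
  assumes "\<And>i. A i \<in> sets borel" "f \<in> measurable M borel" "g \<in> measurable M borel"
  shows "(\<lambda>x. cell_density A m (f x) (g x)) \<in> borel_measurable M"
  using assms unfolding cell_density_def by measurable

lemma nn_integral_cell_density:
  assumes A: "disjoint_family A" "(\<Union>i. A i) = UNIV" "\<And>i. A i \<in> sets borel"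
    and f: "f \<in> measurable M borel" "distr M borel f = m"
    and g: "g \<in> measurable N borel" "distr N borel g = m"
    and m: "finite_measure m" and F: "F \<in> borel_measurable M"
  shows "(\<integral>\<^sup>+ x. (\<integral>\<^sup>+ y. cell_density A m (f x) (g y) \<partial>N) * F x \<partial>M) = (\<integral>\<^sup>+ x. F x \<partial>M)"
proof -
  interpret finite_measure m by (fact m)
  have preimage: "emeasure M (f -` A i \<inter> space M) = ennreal (measure m (A i))"
    "emeasure N (g -` A i \<inter> space N) = ennreal (measure m (A i))" for i
    using emeasure_distr[OF f(1) A(3)] emeasure_distr[OF g(1) A(3)] f(2) g(2)
    by (simp_all add: emeasure_eq_measure)
  have inner: "(\<integral>\<^sup>+ y. cell_density A m u (g y) \<partial>N) = ennreal (1 / measure m (A i)) * ennreal (measure m (A i))"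
    if "u \<in> A i" for u i
  proof -
    have "(\<integral>\<^sup>+ y. cell_density A m u (g y) \<partial>N)
        = (\<integral>\<^sup>+ y. ennreal (1 / measure m (A i)) * indicator (g -` A i \<inter> space N) y \<partial>N)"
      using A(1) that by (intro nn_integral_cong) (simp add: cell_density_eq split: split_indicator)
    also have "\<dots> = ennreal (1 / measure m (A i)) * ennreal (measure m (A i))"
      using measurable_sets[OF g(1) A(3)] by (simp add: nn_integral_cmult_indicator preimage)
    finally show ?thesis .
  qed
  have "AE x in M. f x \<in> A i \<longrightarrow> measure m (A i) > 0" for i
  proof (cases "measure m (A i) > 0")
    case False
    then have "measure m (A i) = 0"
      using measure_nonneg[of m "A i"] by linarith
    then have "f -` A i \<inter> space M \<in> null_sets M"
      using measurable_sets[OF f(1) A(3)] preimage(1)[of i] by (simp add: null_sets_def)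
    then show ?thesis
      by (rule AE_I') auto
  qed simp
  then have "AE x in M. \<forall>i. f x \<in> A i \<longrightarrow> measure m (A i) > 0"
    by (simp add: AE_all_countable)
  then have "AE x in M. (\<integral>\<^sup>+ y. cell_density A m (f x) (g y) \<partial>N) = 1"
  proof eventually_elim
    case (elim x)
    obtain i where "f x \<in> A i" using A(2) by blast
    moreover from this have "measure m (A i) > 0" using elim by blast
    ultimately show ?case
      using inner by (simp add: ennreal_mult[symmetric])
  qed
  then show ?thesis
    by (intro nn_integral_cong_AE) auto
qed

lemma distr_eq_if_nn_integral_indicator_eq:
  assumes f: "f \<in> measurable M N" "f \<in> measurable M' N"
    and eq: "\<And>S. S \<in> sets N \<Longrightarrow> (\<integral>\<^sup>+ x. indicator S (f x) \<partial>M) = (\<integral>\<^sup>+ x. indicator S (f x) \<partial>M')"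
  shows "distr M N f = distr M' N f"
proof (rule measure_eqI)
  fix S
  assume "S \<in> sets (distr M N f)"
  then have S: "S \<in> sets N" by simp
  have "emeasure (distr K N f) S = (\<integral>\<^sup>+ x. indicator S (f x) \<partial>K)" if "f \<in> measurable K N" for K
    by (subst nn_integral_distr[symmetric]) (use S that in auto)
  then show "emeasure (distr M N f) S = emeasure (distr M' N f) S"
    using f eq[OF S] by simp
qed simp

definition glue :: "(nat \<Rightarrow> 'a::topological_space set) \<Rightarrow> 'a measure \<Rightarrow>
    ('a \<times> 'a) measure \<Rightarrow> ('a \<times> 'a) measure \<Rightarrow> ('a \<times> 'a) measure"
  where "glue A m \<pi>1 \<pi>2 =
    distr (density (\<pi>1 \<Otimes>\<^sub>M \<pi>2) (\<lambda>\<omega>. cell_density A m (snd (fst \<omega>)) (fst (snd \<omega>))))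
      (borel \<Otimes>\<^sub>M borel) (\<lambda>\<omega>. (fst (fst \<omega>), snd (snd \<omega>)))"

locale borel_partition_gluing =
  fixes A :: "nat \<Rightarrow> 'a::metric_space set" and m1 m2 m3 :: "'a measure"
    and \<pi>1 \<pi>2 :: "('a \<times> 'a) measure"
  assumes disjoint: "disjoint_family A" and cover: "(\<Union>i. A i) = UNIV"
    and sets_A [measurable]: "\<And>i. A i \<in> sets borel"
    and \<pi>1: "\<pi>1 \<in> couplings m1 m2" and \<pi>2: "\<pi>2 \<in> couplings m2 m3"
begin

lemma sets_\<pi>1 [measurable_cong]: "sets \<pi>1 = sets (borel \<Otimes>\<^sub>M borel)"
  and sets_\<pi>2 [measurable_cong]: "sets \<pi>2 = sets (borel \<Otimes>\<^sub>M borel)"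
  using \<pi>1 \<pi>2 by (simp_all add: couplings_def)

sublocale P1: prob_space \<pi>1
  using \<pi>1 by (simp add: couplings_def)

sublocale P2: prob_space \<pi>2
  using \<pi>2 by (simp add: couplings_def)

sublocale P12: pair_sigma_finite \<pi>1 \<pi>2 ..

abbreviation weight :: "('a \<times> 'a) \<times> ('a \<times> 'a) \<Rightarrow> ennreal" where
  "weight \<omega> \<equiv> cell_density A m2 (snd (fst \<omega>)) (fst (snd \<omega>))"

lemma finite_measure_m2: "finite_measure m2"
proof -
  have "prob_space (distr \<pi>1 borel snd)"
    by (rule P1.prob_space_distr) measurable
  then show ?thesis
    using \<pi>1 by (simp add: couplings_def prob_space.finite_measure)
qed

lemma nn_integral_weight_fst:
  assumes [measurable]: "F \<in> borel_measurable (borel \<Otimes>\<^sub>M borel)"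
  shows "(\<integral>\<^sup>+ \<omega>. weight \<omega> * F (fst \<omega>) \<partial>(\<pi>1 \<Otimes>\<^sub>M \<pi>2)) = (\<integral>\<^sup>+ x. F x \<partial>\<pi>1)"
proof -
  have "(\<integral>\<^sup>+ \<omega>. weight \<omega> * F (fst \<omega>) \<partial>(\<pi>1 \<Otimes>\<^sub>M \<pi>2))
      = (\<integral>\<^sup>+ x. (\<integral>\<^sup>+ y. cell_density A m2 (snd x) (fst y) \<partial>\<pi>2) * F x \<partial>\<pi>1)"
    by (subst P2.nn_integral_fst[symmetric]) (simp_all add: nn_integral_multc)
  also have "\<dots> = (\<integral>\<^sup>+ x. F x \<partial>\<pi>1)"
    using \<pi>1 \<pi>2 disjoint cover finite_measure_m2
    by (intro nn_integral_cell_density) (auto simp: couplings_def)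
  finally show ?thesis .
qed

lemma nn_integral_weight_snd:
  assumes [measurable]: "G \<in> borel_measurable (borel \<Otimes>\<^sub>M borel)"
  shows "(\<integral>\<^sup>+ \<omega>. weight \<omega> * G (snd \<omega>) \<partial>(\<pi>1 \<Otimes>\<^sub>M \<pi>2)) = (\<integral>\<^sup>+ y. G y \<partial>\<pi>2)"
proof -
  have "(\<integral>\<^sup>+ \<omega>. weight \<omega> * G (snd \<omega>) \<partial>(\<pi>1 \<Otimes>\<^sub>M \<pi>2))
      = (\<integral>\<^sup>+ y. (\<integral>\<^sup>+ x. cell_density A m2 (fst y) (snd x) \<partial>\<pi>1) * G y \<partial>\<pi>2)"
    by (subst P12.nn_integral_snd[symmetric])
      (simp_all add: nn_integral_multc cell_density_commute[of A m2 "snd _"])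
  also have "\<dots> = (\<integral>\<^sup>+ y. G y \<partial>\<pi>2)"
    using \<pi>1 \<pi>2 disjoint cover finite_measure_m2
    by (intro nn_integral_cell_density) (auto simp: couplings_def)
  finally show ?thesis .
qed

lemma nn_integral_glue:
  assumes [measurable]: "D \<in> borel_measurable (borel \<Otimes>\<^sub>M borel)"
  shows "(\<integral>\<^sup>+ \<omega>. D \<omega> \<partial>glue A m2 \<pi>1 \<pi>2)
    = (\<integral>\<^sup>+ \<omega>. weight \<omega> * D (fst (fst \<omega>), snd (snd \<omega>)) \<partial>(\<pi>1 \<Otimes>\<^sub>M \<pi>2))"
  unfolding glue_def by (simp add: nn_integral_distr nn_integral_density)

lemma sets_glue [measurable_cong]: "sets (glue A m2 \<pi>1 \<pi>2) = sets (borel \<Otimes>\<^sub>M borel)"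
  by (simp add: glue_def)

lemma glue_in_couplings: "glue A m2 \<pi>1 \<pi>2 \<in> couplings m1 m3"
proof -
  let ?\<gamma> = "glue A m2 \<pi>1 \<pi>2"
  have "distr ?\<gamma> borel fst = distr \<pi>1 borel fst"
  proof (rule distr_eq_if_nn_integral_indicator_eq)
    fix S :: "'a set"
    assume [measurable]: "S \<in> sets borel"
    show "(\<integral>\<^sup>+ x. indicator S (fst x) \<partial>?\<gamma>) = (\<integral>\<^sup>+ x. indicator S (fst x) \<partial>\<pi>1)"
      using nn_integral_weight_fst[of "\<lambda>x. indicator S (fst x)"] by (simp add: nn_integral_glue)
  qed simp_all
  moreover have "distr ?\<gamma> borel snd = distr \<pi>2 borel snd"
  proof (rule distr_eq_if_nn_integral_indicator_eq)
    fix S :: "'a set"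
    assume [measurable]: "S \<in> sets borel"
    show "(\<integral>\<^sup>+ x. indicator S (snd x) \<partial>?\<gamma>) = (\<integral>\<^sup>+ x. indicator S (snd x) \<partial>\<pi>2)"
      using nn_integral_weight_snd[of "\<lambda>x. indicator S (snd x)"] by (simp add: nn_integral_glue)
  qed simp_all
  moreover have "prob_space ?\<gamma>"
    using nn_integral_glue[of "\<lambda>_. 1"] nn_integral_weight_fst[of "\<lambda>_. 1"]
    by (intro prob_spaceI) (simp add: P1.emeasure_space_1)
  ultimately show ?thesis
    using \<pi>1 \<pi>2 by (simp add: couplings_def sets_glue)
qed

lemma nn_integral_glue_le:
  assumes [measurable]: "D \<in> borel_measurable (borel \<Otimes>\<^sub>M borel)"
    "F \<in> borel_measurable (borel \<Otimes>\<^sub>M borel)" "G \<in> borel_measurable (borel \<Otimes>\<^sub>M borel)"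
    and bound: "\<And>x y y' z i. y \<in> A i \<Longrightarrow> y' \<in> A i \<Longrightarrow> D (x, z) \<le> c1 * F (x, y) + c2 + c3 * G (y', z)"
  shows "(\<integral>\<^sup>+ \<omega>. D \<omega> \<partial>glue A m2 \<pi>1 \<pi>2) \<le> c1 * (\<integral>\<^sup>+ \<omega>. F \<omega> \<partial>\<pi>1) + c2 + c3 * (\<integral>\<^sup>+ \<omega>. G \<omega> \<partial>\<pi>2)"
proof -
  let ?M = "\<pi>1 \<Otimes>\<^sub>M \<pi>2"
  have "(\<integral>\<^sup>+ \<omega>. D \<omega> \<partial>glue A m2 \<pi>1 \<pi>2)
      \<le> (\<integral>\<^sup>+ \<omega>. c1 * (weight \<omega> * F (fst \<omega>)) + c2 * weight \<omega> + c3 * (weight \<omega> * G (snd \<omega>)) \<partial>?M)"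
    unfolding nn_integral_glue[OF assms(1)]
  proof (intro nn_integral_mono)
    fix \<omega> :: "('a \<times> 'a) \<times> ('a \<times> 'a)"
    obtain x y y' z where \<omega>: "\<omega> = ((x, y), (y', z))" by (metis prod.collapse)
    show "weight \<omega> * D (fst (fst \<omega>), snd (snd \<omega>))
      \<le> c1 * (weight \<omega> * F (fst \<omega>)) + c2 * weight \<omega> + c3 * (weight \<omega> * G (snd \<omega>))"
    proof (cases "\<exists>i. y \<in> A i \<and> y' \<in> A i")
      case True
      then obtain i where "y \<in> A i" "y' \<in> A i" by blast
      then have "weight \<omega> * D (x, z) \<le> weight \<omega> * (c1 * F (x, y) + c2 + c3 * G (y', z))"
        by (intro mult_left_mono bound) auto
      then show ?thesis by (simp add: \<omega> algebra_simps)
    qed (auto simp: \<omega> cell_density_eq_0)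
  qed
  also have "\<dots> = (\<integral>\<^sup>+ \<omega>. c1 * (weight \<omega> * F (fst \<omega>)) + c2 * weight \<omega> \<partial>?M)
      + (\<integral>\<^sup>+ \<omega>. c3 * (weight \<omega> * G (snd \<omega>)) \<partial>?M)"
    by (rule nn_integral_add) measurable
  also have "(\<integral>\<^sup>+ \<omega>. c1 * (weight \<omega> * F (fst \<omega>)) + c2 * weight \<omega> \<partial>?M)
      = (\<integral>\<^sup>+ \<omega>. c1 * (weight \<omega> * F (fst \<omega>)) \<partial>?M) + (\<integral>\<^sup>+ \<omega>. c2 * weight \<omega> \<partial>?M)"
    by (rule nn_integral_add) measurable
  also have "(\<integral>\<^sup>+ \<omega>. c1 * (weight \<omega> * F (fst \<omega>)) \<partial>?M) = c1 * (\<integral>\<^sup>+ \<omega>. F \<omega> \<partial>\<pi>1)"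
    by (subst nn_integral_cmult) (measurable, simp add: nn_integral_weight_fst)
  also have "(\<integral>\<^sup>+ \<omega>. c2 * weight \<omega> \<partial>?M) = c2"
    using nn_integral_weight_fst[of "\<lambda>_. 1"]
    by (subst nn_integral_cmult) (measurable, simp add: P1.emeasure_space_1)
  also have "(\<integral>\<^sup>+ \<omega>. c3 * (weight \<omega> * G (snd \<omega>)) \<partial>?M) = c3 * (\<integral>\<^sup>+ \<omega>. G \<omega> \<partial>\<pi>2)"
    by (subst nn_integral_cmult) (measurable, simp add: nn_integral_weight_snd)
  finally show ?thesis .
qed

end

section \<open>The triangle inequality for \<open>W\<^sub>p\<close>\<close>

definition transport_cost :: "real \<Rightarrow> ('a::metric_space \<times> 'a) measure \<Rightarrow> ennreal" where
  "transport_cost p \<pi> = (\<integral>\<^sup>+ \<omega>. ennreal (dist (fst \<omega>) (snd \<omega>) powr p) \<partial>\<pi>)"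

lemma Wp_eq_transport_cost: "Wp p m n = enn2real (INF \<pi> \<in> couplings m n. transport_cost p \<pi>) powr (1 / p)"
  by (simp add: Wp_def transport_cost_def)

lemma Wp_nonneg: "Wp p m n \<ge> 0"
  by (simp add: Wp_def)

lemma nn_integral_dist_powr_le:
  fixes x y :: "'b \<Rightarrow> 'a::metric_space"
  assumes "p \<ge> 1"
    and [measurable]: "(\<lambda>\<omega>. dist z (x \<omega>) powr p) \<in> borel_measurable M"
      "(\<lambda>\<omega>. dist z (y \<omega>) powr p) \<in> borel_measurable M"
  shows "(\<integral>\<^sup>+ \<omega>. ennreal (dist (x \<omega>) (y \<omega>) powr p) \<partial>M)
    \<le> ennreal (2 powr (p - 1)) *
      ((\<integral>\<^sup>+ \<omega>. ennreal (dist z (x \<omega>) powr p) \<partial>M) + (\<integral>\<^sup>+ \<omega>. ennreal (dist z (y \<omega>) powr p) \<partial>M))"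
proof -
  have "(\<integral>\<^sup>+ \<omega>. ennreal (dist (x \<omega>) (y \<omega>) powr p) \<partial>M)
      \<le> (\<integral>\<^sup>+ \<omega>. ennreal (2 powr (p - 1)) * (ennreal (dist z (x \<omega>) powr p) + ennreal (dist z (y \<omega>) powr p)) \<partial>M)"
  proof (rule nn_integral_mono)
    fix \<omega>
    have "dist (x \<omega>) (y \<omega>) powr p \<le> (dist z (x \<omega>) + dist z (y \<omega>)) powr p"
      using assms(1) by (intro powr_mono2 dist_triangle3) auto
    also have "\<dots> \<le> 2 powr (p - 1) * (dist z (x \<omega>) powr p + dist z (y \<omega>) powr p)"
      using assms(1) by (intro powr_add_le) auto
    finally show "ennreal (dist (x \<omega>) (y \<omega>) powr p)
        \<le> ennreal (2 powr (p - 1)) * (ennreal (dist z (x \<omega>) powr p) + ennreal (dist z (y \<omega>) powr p))"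
      by (simp add: ennreal_plus[symmetric] ennreal_mult[symmetric] ennreal_leI del: ennreal_plus)
  qed
  also have "\<dots> = ennreal (2 powr (p - 1)) * ((\<integral>\<^sup>+ \<omega>. ennreal (dist z (x \<omega>) powr p) \<partial>M) + (\<integral>\<^sup>+ \<omega>. ennreal (dist z (y \<omega>) powr p) \<partial>M))"
    by (simp add: nn_integral_cmult nn_integral_add)
  finally show ?thesis .
qed

lemma Pp_moment_finite:
  assumes "m \<in> Pp p" "p \<ge> 1"
  shows "(\<integral>\<^sup>+ x. ennreal (dist z x powr p) \<partial>m) < \<infinity>"
proof -
  obtain x0 where m: "prob_space m" "sets m = sets borel"
    and fin: "(\<integral>\<^sup>+ x. ennreal (dist x0 x powr p) \<partial>m) < \<infinity>"
    using assms(1) unfolding Pp_def by auto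
  note [measurable_cong] = m(2)
  have "(\<integral>\<^sup>+ x. ennreal (dist z x powr p) \<partial>m)
      \<le> ennreal (2 powr (p - 1)) * ((\<integral>\<^sup>+ x. ennreal (dist x0 z powr p) \<partial>m) + (\<integral>\<^sup>+ x. ennreal (dist x0 x powr p) \<partial>m))"
    using assms(2) by (intro nn_integral_dist_powr_le) measurable
  also have "\<dots> < \<infinity>"
    using fin prob_space.emeasure_space_1[OF m(1)] by (simp add: ennreal_mult_less_top)
  finally show ?thesis .
qed

lemma transport_cost_finite:
  assumes "m1 \<in> Pp p" "m2 \<in> Pp p" "p \<ge> 1" and \<pi>: "\<pi> \<in> couplings m1 m2"
  shows "transport_cost p \<pi> < \<infinity>"
proof -
  fix z :: 'a
  have [measurable_cong]: "sets \<pi> = sets (borel \<Otimes>\<^sub>M borel)"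
    using \<pi> by (simp add: couplings_def)
  have marginal: "(\<integral>\<^sup>+ \<omega>. ennreal (dist z (f \<omega>) powr p) \<partial>\<pi>) = (\<integral>\<^sup>+ x. ennreal (dist z x powr p) \<partial>distr \<pi> borel f)"
    if [measurable]: "f \<in> measurable (borel \<Otimes>\<^sub>M borel) borel" for f
    by (subst nn_integral_distr) simp_all
  have "transport_cost p \<pi>
      \<le> ennreal (2 powr (p - 1)) * ((\<integral>\<^sup>+ \<omega>. ennreal (dist z (fst \<omega>) powr p) \<partial>\<pi>) + (\<integral>\<^sup>+ \<omega>. ennreal (dist z (snd \<omega>) powr p) \<partial>\<pi>))"
    unfolding transport_cost_def using assms(3) by (intro nn_integral_dist_powr_le) measurable
  also have "\<dots> < \<infinity>"
    using \<pi> Pp_moment_finite[OF assms(1,3)] Pp_moment_finite[OF assms(2,3)]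
    by (simp add: marginal couplings_def ennreal_mult_less_top)
  finally show ?thesis .
qed

lemma pair_measure_in_couplings:
  assumes "prob_space m1" "prob_space m2" "sets m1 = sets borel" "sets m2 = sets borel"
  shows "m1 \<Otimes>\<^sub>M m2 \<in> couplings m1 m2"
proof -
  interpret P: pair_prob_space m1 m2
    using assms(1,2) by (simp add: pair_prob_space_def pair_sigma_finite_def prob_space_imp_sigma_finite)
  note [measurable_cong] = assms(3,4)
  have "distr (m1 \<Otimes>\<^sub>M m2) borel fst = distr (m1 \<Otimes>\<^sub>M m2) m1 fst"
    by (rule distr_cong) (simp_all add: assms(3))
  also have "\<dots> = m1"
    by (rule P.M2.distr_pair_fst)
  finally have fst: "distr (m1 \<Otimes>\<^sub>M m2) borel fst = m1" .
  have "distr (m1 \<Otimes>\<^sub>M m2) borel snd = distr (distr (m2 \<Otimes>\<^sub>M m1) (m1 \<Otimes>\<^sub>M m2) (\<lambda>(x, y). (y, x))) borel snd"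
    by (simp only: P.distr_pair_swap[symmetric])
  also have "\<dots> = distr (m2 \<Otimes>\<^sub>M m1) borel (snd \<circ> (\<lambda>(x, y). (y, x)))"
    by (rule distr_distr) measurable
  also have "\<dots> = distr (m2 \<Otimes>\<^sub>M m1) m2 fst"
    by (rule distr_cong) (auto simp: assms(4))
  also have "\<dots> = m2"
    by (rule P.M1.distr_pair_fst)
  finally have snd: "distr (m1 \<Otimes>\<^sub>M m2) borel snd = m2" .
  have "sets (m1 \<Otimes>\<^sub>M m2) = sets (borel \<Otimes>\<^sub>M borel)"
    using assms(3,4) by (rule sets_pair_measure_cong)
  then show ?thesis
    using assms fst snd by (simp add: couplings_def prob_space_pair)
qed

lemma exists_coupling_transport_cost_less:
  assumes "m1 \<in> Pp p" "m2 \<in> Pp p" "p \<ge> 1" and "Wp p m1 m2 < a"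
  obtains \<pi> where "\<pi> \<in> couplings m1 m2" "transport_cost p \<pi> < ennreal (a powr p)"
proof -
  let ?I = "INF \<pi> \<in> couplings m1 m2. transport_cost p \<pi>"
  have "m1 \<Otimes>\<^sub>M m2 \<in> couplings m1 m2"
    using assms(1,2) by (intro pair_measure_in_couplings) (auto simp: Pp_def)
  then have "?I < \<infinity>"
    using transport_cost_finite[OF assms(1-3)] by (meson INF_lower le_less_trans)
  then have I: "?I = ennreal (enn2real ?I)"
    by simp
  have "(enn2real ?I powr (1 / p)) powr p < a powr p"
    using assms(3,4) Wp_nonneg[of p m1 m2] by (intro powr_less_mono2) (auto simp: Wp_eq_transport_cost)
  then have "enn2real ?I < a powr p"
    using assms(3) by (simp add: powr_powr)
  moreover have "a > 0"
    using assms(4) Wp_nonneg[of p m1 m2] by linarith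
  ultimately have "?I < ennreal (a powr p)"
    by (subst I) (simp add: ennreal_lessI)
  then show ?thesis
    using that by (auto simp: INF_less_iff)
qed

lemma Wp_le_of_transport_cost_le:
  assumes "\<pi> \<in> couplings m n" "transport_cost p \<pi> \<le> ennreal (R powr p)" "p > 0" "R \<ge> 0"
  shows "Wp p m n \<le> R"
proof -
  have "(INF \<pi> \<in> couplings m n. transport_cost p \<pi>) \<le> ennreal (R powr p)"
    using assms(1,2) by (meson INF_lower order_trans)
  then have "enn2real (INF \<pi> \<in> couplings m n. transport_cost p \<pi>) \<le> R powr p"
    by (intro enn2real_leI) auto
  then have "Wp p m n \<le> (R powr p) powr (1 / p)"
    unfolding Wp_eq_transport_cost using assms(3) by (intro powr_mono2) auto
  also have "\<dots> = R"
    using assms(3,4) by (simp add: powr_powr)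
  finally show ?thesis .
qed

lemma Wp_triangle_approx:
  fixes m1 m2 m3 :: "'a::metric_space measure"
  assumes sep: "separable_space (euclidean :: 'a topology)"
    and m: "m1 \<in> Pp p" "m2 \<in> Pp p" "m3 \<in> Pp p" and p: "p \<ge> 1"
    and a: "Wp p m1 m2 < a" and b: "Wp p m2 m3 < b" and c: "c > 0"
  shows "Wp p m1 m3 \<le> a + c + b"
proof -
  have "a > 0" "b > 0"
    using a b Wp_nonneg[of p] by (meson le_less_trans)+
  obtain \<pi>1 where \<pi>1: "\<pi>1 \<in> couplings m1 m2" "transport_cost p \<pi>1 < ennreal (a powr p)"
    using exists_coupling_transport_cost_less[OF m(1,2) p a] .
  obtain \<pi>2 where \<pi>2: "\<pi>2 \<in> couplings m2 m3" "transport_cost p \<pi>2 < ennreal (b powr p)"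
    using exists_coupling_transport_cost_less[OF m(2,3) p b] .
  obtain A :: "nat \<Rightarrow> 'a set" where A: "disjoint_family A" "(\<Union>i. A i) = UNIV" "\<And>i. A i \<in> sets borel"
    and small: "\<And>i y y'. y \<in> A i \<Longrightarrow> y' \<in> A i \<Longrightarrow> dist y y' < c"
    using separable_space_small_borel_partition[OF sep c] by blast
  interpret G: borel_partition_gluing A m1 m2 m3 \<pi>1 \<pi>2
    using A \<pi>1(1) \<pi>2(1) by unfold_locales
  define R where "R = a + c + b"
  have "R > 0" using \<open>a > 0\<close> \<open>b > 0\<close> c by (simp add: R_def)
  \<comment> \<open>With weights proportional to \<open>a\<close>, \<open>c\<close>, \<open>b\<close> the three cost bounds add up to exactly \<open>R powr p\<close>.\<close>
  define K where "K r = R powr (p - 1) * r powr (1 - p)" for r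
  have K: "K r \<ge> 0" "K r * r powr p = R powr (p - 1) * r" if "r > 0" for r
    using that by (simp_all add: K_def powr_add[symmetric])
  define D where "D \<omega> = ennreal (dist (fst \<omega>) (snd \<omega>) powr p)" for \<omega> :: "'a \<times> 'a"
  have [measurable]: "D \<in> borel_measurable (borel \<Otimes>\<^sub>M borel)"
    using borel_measurable_dist_pair[OF sep] unfolding D_def by measurable
  have bound: "D (x, z) \<le> ennreal (K a) * D (x, y) + ennreal (K c * c powr p) + ennreal (K b) * D (y', z)"
    if "y \<in> A i" "y' \<in> A i" for x y y' z i
  proof -
    have "dist x z \<le> dist x y + c + dist y' z"
      using dist_triangle[of x z y] dist_triangle[of y z y'] small[OF that] by simp
    then have "dist x z powr p \<le> (dist x y + c + dist y' z) powr p"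
      using p by (intro powr_mono2) auto
    also have "\<dots> \<le> K a * dist x y powr p + K c * c powr p + K b * dist y' z powr p"
      using powr_sum_le_weighted[of "{0::nat, 1, 2}" p
          "\<lambda>i. if i = 0 then dist x y else if i = 1 then c else dist y' z"
          "\<lambda>i. if i = 0 then a else if i = 1 then c else b"]
        p c \<open>a > 0\<close> \<open>b > 0\<close>
      by (simp add: K_def R_def algebra_simps)
    finally show ?thesis
      using K \<open>a > 0\<close> \<open>b > 0\<close> c
      by (simp add: D_def ennreal_plus[symmetric] ennreal_mult[symmetric] del: ennreal_plus)
  qed
  have "transport_cost p (glue A m2 \<pi>1 \<pi>2)
      \<le> ennreal (K a) * transport_cost p \<pi>1 + ennreal (K c * c powr p) + ennreal (K b) * transport_cost p \<pi>2"
    unfolding transport_cost_def D_def[symmetric]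
    by (rule G.nn_integral_glue_le) (measurable, rule bound)
  also have "\<dots> \<le> ennreal (K a) * ennreal (a powr p) + ennreal (K c * c powr p) + ennreal (K b) * ennreal (b powr p)"
    using \<pi>1(2) \<pi>2(2) by (intro add_mono mult_left_mono order_refl) auto
  also have "\<dots> = ennreal (R powr (p - 1) * R)"
    using K \<open>a > 0\<close> \<open>b > 0\<close> c
    by (simp add: ennreal_plus[symmetric] ennreal_mult[symmetric] R_def algebra_simps del: ennreal_plus)
  also have "R powr (p - 1) * R = R powr p"
    using \<open>R > 0\<close> by (simp add: powr_diff)
  finally show ?thesis
    using G.glue_in_couplings \<open>R > 0\<close> p by (intro Wp_le_of_transport_cost_le[of _ _ _ p]) (auto simp: R_def)
qed

lemma Wp_triangle:
  fixes m1 m2 m3 :: "'a::metric_space measure"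
  assumes "separable_space (euclidean :: 'a topology)"
    and "m1 \<in> Pp p" "m2 \<in> Pp p" "m3 \<in> Pp p" "p \<ge> 1"
  shows "Wp p m1 m3 \<le> Wp p m1 m2 + Wp p m2 m3"
proof (rule field_le_epsilon)
  fix e :: real
  assume "0 < e"
  then have "Wp p m1 m3 \<le> (Wp p m1 m2 + e / 3) + e / 3 + (Wp p m2 m3 + e / 3)"
    by (intro Wp_triangle_approx[OF assms]) auto
  then show "Wp p m1 m3 \<le> Wp p m1 m2 + Wp p m2 m3 + e"
    by simp
qed

section \<open>Co-rays and uniformly approximating geodesics\<close>

lemma is_ray_in_Pp: "is_ray p l \<Longrightarrow> t \<ge> 0 \<Longrightarrow> l t \<in> Pp p"
  unfolding is_ray_def by blast

lemma Wp_is_ray: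
  "is_ray p l \<Longrightarrow> s \<ge> 0 \<Longrightarrow> t \<ge> 0 \<Longrightarrow> Wp p (l s) (l t) = \<bar>s - t\<bar> * Wp p (l 0) (l 1)"
  unfolding is_ray_def by blast

lemma Tgeod_in_Pp: "g \<in> Tgeod p m n \<Longrightarrow> t \<in> {0..Wp p m n} \<Longrightarrow> g t \<in> Pp p"
  by (simp add: Tgeod_def)

lemma Wp_Tgeod:
  "g \<in> Tgeod p m n \<Longrightarrow> s \<in> {0..Wp p m n} \<Longrightarrow> t \<in> {0..Wp p m n} \<Longrightarrow> Wp p (g s) (g t) = \<bar>s - t\<bar>"
  by (simp add: Tgeod_def)

text \<open>Locally uniform form of the co-ray condition; members of \<^const>\<open>Tgeod\<close> are only
  constrained on \<open>[0, Wp p l0 (mu s)]\<close>, hence the bound on \<open>t\<close>.\<close>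
definition approximable_by_geodesics ::
    "real \<Rightarrow> (real \<Rightarrow> 'a::metric_space measure) \<Rightarrow> (real \<Rightarrow> 'a measure) \<Rightarrow> bool"
  where "approximable_by_geodesics p l mu \<longleftrightarrow>
    (\<forall>\<epsilon>>0. \<forall>T R. \<exists>s l0 g. R \<le> s \<and> l0 \<in> Pp p \<and> Wp p l0 (l 0) < \<epsilon> \<and> g \<in> Tgeod p l0 (mu s) \<and>
      (\<forall>t\<in>{0..T}. t \<le> Wp p l0 (mu s) \<longrightarrow> Wp p (g t) (l t) < \<epsilon>))"

lemma co_ray_if_approximable_by_geodesics:
  assumes ray: "is_ray p l" and approx: "approximable_by_geodesics p l mu"
  shows "co_ray p l mu"
proof -
  define e where "e n = inverse (real (Suc n))" for n
  have "\<exists>s l0 g. real n \<le> s \<and> l0 \<in> Pp p \<and> Wp p l0 (l 0) < e n \<and> g \<in> Tgeod p l0 (mu s) \<and>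
      (\<forall>t\<in>{0..real n}. t \<le> Wp p l0 (mu s) \<longrightarrow> Wp p (g t) (l t) < e n)" for n
    using approx unfolding approximable_by_geodesics_def e_def by simp
  then obtain s l0 g where s: "\<And>n. real n \<le> s n" and l0: "\<And>n. l0 n \<in> Pp p"
    and l0_close: "\<And>n. Wp p (l0 n) (l 0) < e n" and g: "\<And>n. g n \<in> Tgeod p (l0 n) (mu (s n))"
    and g_close: "\<And>n t. t \<in> {0..real n} \<Longrightarrow> t \<le> Wp p (l0 n) (mu (s n)) \<Longrightarrow> Wp p (g n t) (l t) < e n"
    by metis
  have e: "e \<longlonglongrightarrow> 0"
    unfolding e_def by (rule LIMSEQ_inverse_real_of_nat)
  \<comment> \<open>\<^const>\<open>Tgeod\<close> does not constrain \<open>g n\<close> beyond its endpoint, so it may be continued by \<open>l\<close>.\<close>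
  define ln where "ln n t = (if t \<le> Wp p (l0 n) (mu (s n)) then g n t else l t)" for n t
  show ?thesis
    unfolding co_ray_def
  proof (intro conjI exI[of _ s] exI[of _ l0] exI[of _ ln] allI impI)
    show "filterlim s at_top sequentially"
      by (rule filterlim_at_top_mono[OF filterlim_real_sequentially]) (use s in simp)
    show "(\<lambda>n. Wp p (l0 n) (l 0)) \<longlonglongrightarrow> 0"
      using l0_close by (intro tendsto_sandwich[OF _ _ tendsto_const e]) (auto simp: Wp_nonneg less_imp_le)
    show "ln n \<in> Tgeod p (l0 n) (mu (s n))" for n
      using g[of n] Wp_nonneg[of p "l0 n" "mu (s n)"] by (simp add: Tgeod_def ln_def)
    fix t :: real
    assume "t \<ge> 0"
    have "\<forall>\<^sub>F n in sequentially. Wp p (ln n t) (l t) \<le> e n"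
      using eventually_ge_at_top[of "nat \<lceil>t\<rceil>"]
    proof eventually_elim
      case (elim n)
      then have "t \<in> {0..real n}"
        using \<open>t \<ge> 0\<close> real_nat_ceiling_ge[of t] by (meson atLeastAtMost_iff of_nat_le_iff order_trans)
      then show ?case
        using g_close[of t n] Wp_is_ray[OF ray \<open>t \<ge> 0\<close> \<open>t \<ge> 0\<close>]
        by (auto simp: ln_def e_def less_imp_le)
    qed
    then show "(\<lambda>n. Wp p (ln n t) (l t)) \<longlonglongrightarrow> 0"
      by (intro tendsto_sandwich[OF _ _ tendsto_const e]) (auto simp: Wp_nonneg)
  qed (use ray l0 in auto)
qed

lemma grid_point_below:
  fixes \<delta> t T :: real
  assumes "\<delta> > 0" "0 \<le> t" "t \<le> T"
  obtains j where "j \<le> nat \<lceil>T / \<delta>\<rceil>" "real j * \<delta> \<le> t" "t < real j * \<delta> + \<delta>"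
proof
  define j where "j = nat \<lfloor>t / \<delta>\<rfloor>"
  have j: "real j = of_int \<lfloor>t / \<delta>\<rfloor>"
    using assms by (simp add: j_def)
  show "real j * \<delta> \<le> t" "t < real j * \<delta> + \<delta>"
    using assms j floor_divide_lower[of \<delta> t] floor_divide_upper[of \<delta> t] by (simp_all add: algebra_simps)
  have "\<lfloor>t / \<delta>\<rfloor> \<le> \<lceil>T / \<delta>\<rceil>"
    using assms by (smt (verit) divide_right_mono floor_le_ceiling ceiling_mono floor_mono)
  then show "j \<le> nat \<lceil>T / \<delta>\<rceil>"
    unfolding j_def by linarith
qed

lemma approximable_by_geodesics_if_co_ray:
  fixes l mu :: "real \<Rightarrow> 'a::metric_space measure"
  assumes sep: "separable_space (euclidean :: 'a topology)" and p: "p \<ge> 1" and co_ray: "co_ray p l mu"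
  shows "approximable_by_geodesics p l mu"
  unfolding approximable_by_geodesics_def
proof (intro allI impI)
  fix \<epsilon> T R :: real
  assume "\<epsilon> > 0"
  obtain s l0 ln where ray: "is_ray p l" and s: "filterlim s at_top sequentially"
    and l0: "\<And>n. l0 n \<in> Pp p" and l0_lim: "(\<lambda>n. Wp p (l0 n) (l 0)) \<longlonglongrightarrow> 0"
    and ln: "\<And>n. ln n \<in> Tgeod p (l0 n) (mu (s n))"
    and ln_lim: "\<And>t. t \<ge> 0 \<Longrightarrow> (\<lambda>n. Wp p (ln n t) (l t)) \<longlonglongrightarrow> 0"
    using co_ray unfolding co_ray_def by blast
  define v where "v = Wp p (l 0) (l 1)"
  have "v \<ge> 0" by (simp add: v_def Wp_nonneg)
  define \<delta> where "\<delta> = \<epsilon> / (2 * (1 + v))"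
  have "\<delta> > 0" "(1 + v) * \<delta> = \<epsilon> / 2"
    using \<open>\<epsilon> > 0\<close> \<open>v \<ge> 0\<close> by (simp_all add: \<delta>_def field_simps)
  define grid where "grid = (\<lambda>j. real j * \<delta>) ` {..nat \<lceil>T / \<delta>\<rceil>}"
  have "\<forall>\<^sub>F n in sequentially. R \<le> s n \<and> Wp p (l0 n) (l 0) < \<epsilon> \<and> (\<forall>q\<in>grid. Wp p (ln n q) (l q) < \<epsilon> / 2)"
  proof (intro eventually_conj)
    show "\<forall>\<^sub>F n in sequentially. R \<le> s n"
      using s by (simp add: filterlim_at_top)
    show "\<forall>\<^sub>F n in sequentially. Wp p (l0 n) (l 0) < \<epsilon>"
      using order_tendstoD(2)[OF l0_lim \<open>\<epsilon> > 0\<close>] .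
    show "\<forall>\<^sub>F n in sequentially. \<forall>q\<in>grid. Wp p (ln n q) (l q) < \<epsilon> / 2"
      using \<open>\<delta> > 0\<close> \<open>\<epsilon> > 0\<close> unfolding grid_def
      by (intro eventually_ball_finite ballI order_tendstoD(2)[OF ln_lim]) auto
  qed
  then obtain n where "R \<le> s n" "Wp p (l0 n) (l 0) < \<epsilon>" and grid_close: "\<forall>q\<in>grid. Wp p (ln n q) (l q) < \<epsilon> / 2"
    by (auto dest: eventually_happens)
  moreover have "Wp p (ln n t) (l t) < \<epsilon>" if t_T: "t \<in> {0..T}" and t_L: "t \<le> Wp p (l0 n) (mu (s n))" for t
  proof -
    obtain j where j: "j \<le> nat \<lceil>T / \<delta>\<rceil>" "real j * \<delta> \<le> t" "t < real j * \<delta> + \<delta>"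
      using grid_point_below[OF \<open>\<delta> > 0\<close>] t_T by auto
    define q where "q = real j * \<delta>"
    have "q \<in> grid" using j(1) unfolding grid_def q_def by blast
    have "q \<ge> 0" using \<open>\<delta> > 0\<close> by (simp add: q_def)
    have t: "t \<in> {0..Wp p (l0 n) (mu (s n))}" and q: "q \<in> {0..Wp p (l0 n) (mu (s n))}"
      using t_T t_L j(2) \<open>q \<ge> 0\<close> by (auto simp: q_def)
    have "t \<ge> 0" using t_T by simp
    have "Wp p (ln n t) (l t) \<le> Wp p (ln n t) (ln n q) + Wp p (ln n q) (l t)"
      using Tgeod_in_Pp[OF ln t] Tgeod_in_Pp[OF ln q] is_ray_in_Pp[OF ray \<open>t \<ge> 0\<close>]
      by (rule Wp_triangle[OF sep _ _ _ p])
    also have "Wp p (ln n q) (l t) \<le> Wp p (ln n q) (l q) + Wp p (l q) (l t)"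
      using Tgeod_in_Pp[OF ln q] is_ray_in_Pp[OF ray \<open>q \<ge> 0\<close>] is_ray_in_Pp[OF ray \<open>t \<ge> 0\<close>]
      by (rule Wp_triangle[OF sep _ _ _ p])
    also have "Wp p (ln n t) (ln n q) + (Wp p (ln n q) (l q) + Wp p (l q) (l t)) < (t - q) + (\<epsilon> / 2 + (t - q) * v)"
      using Wp_Tgeod[OF ln t q] Wp_is_ray[OF ray \<open>q \<ge> 0\<close> \<open>t \<ge> 0\<close>] grid_close \<open>q \<in> grid\<close> j(2)
      by (simp add: v_def q_def)
    also have "\<dots> \<le> (1 + v) * \<delta> + \<epsilon> / 2"
    proof -
      have "t - q \<le> \<delta>" using j(3) by (simp add: q_def)
      then have "(t - q) * v \<le> \<delta> * v" using \<open>v \<ge> 0\<close> by (rule mult_right_mono)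
      then show ?thesis using \<open>t - q \<le> \<delta>\<close> by (simp add: algebra_simps)
    qed
    finally show ?thesis
      using \<open>(1 + v) * \<delta> = \<epsilon> / 2\<close> by simp
  qed
  ultimately show "\<exists>s l0 g. R \<le> s \<and> l0 \<in> Pp p \<and> Wp p l0 (l 0) < \<epsilon> \<and> g \<in> Tgeod p l0 (mu s) \<and>
      (\<forall>t\<in>{0..T}. t \<le> Wp p l0 (mu s) \<longrightarrow> Wp p (g t) (l t) < \<epsilon>)"
    using l0 ln by blast
qed

lemma approximable_by_geodesics_of_shifts:
  fixes l mu :: "real \<Rightarrow> 'a::metric_space measure" and \<tau> :: "nat \<Rightarrow> real"
  assumes sep: "separable_space (euclidean :: 'a topology)" and p: "p \<ge> 1" and ray: "is_ray p l"
    and \<tau>: "\<And>n. \<tau> n \<ge> 0" "\<tau> \<longlonglongrightarrow> 0"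
    and shifts: "\<And>n. approximable_by_geodesics p (\<lambda>t. l (t + \<tau> n)) mu"
  shows "approximable_by_geodesics p l mu"
  unfolding approximable_by_geodesics_def
proof (intro allI impI)
  fix \<epsilon> T R :: real
  assume "\<epsilon> > 0"
  define v where "v = Wp p (l 0) (l 1)"
  have "(\<lambda>n. \<tau> n * v) \<longlonglongrightarrow> 0"
    using tendsto_mult_left_zero[OF \<tau>(2)] .
  then have "\<forall>\<^sub>F n in sequentially. \<tau> n * v < \<epsilon> / 2"
    by (rule order_tendstoD) (use \<open>\<epsilon> > 0\<close> in simp)
  then obtain n where n: "\<tau> n * v < \<epsilon> / 2"
    by (auto dest: eventually_happens)
  have shift_close: "Wp p (l (t + \<tau> n)) (l t) = \<tau> n * v" if "t \<ge> 0" for t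
    using Wp_is_ray[OF ray, of "t + \<tau> n" t] that \<tau>(1)[of n] by (simp add: v_def)
  have "\<epsilon> / 2 > 0" using \<open>\<epsilon> > 0\<close> by simp
  with shifts[of n] obtain s l0 g where "R \<le> s" and l0: "l0 \<in> Pp p" "Wp p l0 (l (0 + \<tau> n)) < \<epsilon> / 2"
    and g: "g \<in> Tgeod p l0 (mu s)"
    and g_close: "\<And>t. t \<in> {0..T} \<Longrightarrow> t \<le> Wp p l0 (mu s) \<Longrightarrow> Wp p (g t) (l (t + \<tau> n)) < \<epsilon> / 2"
    unfolding approximable_by_geodesics_def by blast
  have "Wp p l0 (l 0) \<le> Wp p l0 (l \<tau>) + Wp p (l \<tau>) (l 0)" if "\<tau> \<ge> 0" for \<tau>
    using l0(1) is_ray_in_Pp[OF ray that] is_ray_in_Pp[OF ray order_refl] by (rule Wp_triangle[OF sep _ _ _ p])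
  then have "Wp p l0 (l 0) < \<epsilon>"
    using l0(2) shift_close[of 0] n \<tau>(1)[of n] by fastforce
  moreover have "Wp p (g t) (l t) < \<epsilon>" if t_T: "t \<in> {0..T}" and t_L: "t \<le> Wp p l0 (mu s)" for t
  proof -
    have "t \<ge> 0" using t_T by simp
    have "Wp p (g t) (l t) \<le> Wp p (g t) (l (t + \<tau> n)) + Wp p (l (t + \<tau> n)) (l t)"
      using Tgeod_in_Pp[OF g] t_T t_L is_ray_in_Pp[OF ray] \<tau>(1)[of n]
      by (intro Wp_triangle[OF sep _ _ _ p]) auto
    then show ?thesis
      using g_close[OF t_T t_L] shift_close[OF \<open>t \<ge> 0\<close>] n by simp
  qed
  ultimately show "\<exists>s l0 g. R \<le> s \<and> l0 \<in> Pp p \<and> Wp p l0 (l 0) < \<epsilon> \<and> g \<in> Tgeod p l0 (mu s) \<and>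
      (\<forall>t\<in>{0..T}. t \<le> Wp p l0 (mu s) \<longrightarrow> Wp p (g t) (l t) < \<epsilon>)"
    using \<open>R \<le> s\<close> l0(1) g by blast
qed

theorem theorem5p6:
  fixes p :: real
    and mu nu :: "real \<Rightarrow> 'a::{metric_space, complete_space} measure"
    and tn :: "nat \<Rightarrow> real"
  assumes "separable_space (euclidean :: 'a topology)"
    and "\<not> compact (UNIV :: 'a set)"
    and "locally_compact_space (euclidean :: 'a topology)"
    and "length_space TYPE('a)"
    and "non_branching TYPE('a)"
    and "p > 1"
    and "unit_ray p mu"
    and "unit_ray p nu"
    and "\<forall>n. tn n > 0"
    and "tn \<longlonglongrightarrow> 0"
    and "\<forall>n. co_ray p (\<lambda>t. nu (t + tn n)) mu \<and>
           (\<forall>l. co_ray p l mu \<and> l 0 = nu (tn n) \<longrightarrow> (\<forall>t\<ge>0. l t = nu (t + tn n)))"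
  shows "co_ray p nu mu"
proof -
  note sep = assms(1)
  have p: "p \<ge> 1" using assms(6) by simp
  have ray: "is_ray p nu" using assms(8) by (simp add: unit_ray_def)
  have "approximable_by_geodesics p (\<lambda>t. nu (t + tn n)) mu" for n
    using assms(11) by (intro approximable_by_geodesics_if_co_ray[OF sep p]) blast
  then have "approximable_by_geodesics p nu mu"
    using assms(9,10) by (intro approximable_by_geodesics_of_shifts[OF sep p ray]) (auto simp: less_imp_le)
  then show ?thesis
    by (rule co_ray_if_approximable_by_geodesics[OF ray])
qed

end
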